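(* The reduction relation $\Rightarrow$ of Combinatory ReFLect (CR) is not strongly normalizing: there exists a well-typed CR term that has an infinite reduction sequence.
   Context: Combinatory ReFLect (CR) is defined as follows. Types: $\sigma ::= \mathsf{bool} \mid \mathsf{unit} \mid \mathsf{term} \mid \sigma_1 \to \sigma_2$. Terms: $e ::= \mathsf{I}_\sigma \mid \mathsf{K}_{\sigma,\tau} \mid \mathsf{S}_{\sigma,\tau,\upsilon} \mid \mathsf{value}_\sigma \mid \mathsf{lift} \mid \mathsf{app} \mid e_1\,e_2 \mid \ulcorner e\urcorner$, where $\sigma,\tau,\upsilon$ range over types and $\ulcorner e\urcorner$ is the quotation of $e$. Typing rules: $\mathsf{I}_\sigma:\sigma\to\sigma$; $\mathsf{K}_{\sigma,\tau}:\sigma\to\tau\to\sigma$; $\mathsf{S}_{\sigma,\tau,\upsilon}:(\sigma\to\tau\to\upsilon)\to(\sigma\to\tau)\to\sigma\to\upsilon$; $\mathsf{value}_\sigma:\mathsf{term}\to\sigma$; $\mathsf{lift}:\mathsf{term}\to\mathsf{term}$; $\mathsf{app}:\mathsf{term}\to\mathsf{term}\to\mathsf{term}$; if $e_1:\sigma\to\tau$ and $e_2:\sigma$ then $e_1\,e_2:\tau$; if $e:\sigma$ then $\ulcorner e\urcorner:\mathsf{term}$. The reduction relation $\Rightarrow$ is the reflexive, transitive, congruence closure of: $\mathsf{I}_\sigma\,e\Rightarrow e$; $\mathsf{K}_{\sigma,\tau}\,e_1\,e_2\Rightarrow e_1$; $\mathsf{S}_{\sigma,\tau,\upsilon}\,e_1\,e_2\,e_3\Rightarrow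 e_1\,e_3\,(e_2\,e_3)$; if $e:\sigma$ then $\mathsf{value}_\sigma\,\ulcorner e\urcorner\Rightarrow e$; $\mathsf{lift}\,\ulcorner s\urcorner\Rightarrow\ulcorner\ulcorner s\urcorner\urcorner$; if $e_1\,e_2$ is well typed then $\mathsf{app}\,\ulcorner e_1\urcorner\,\ulcorner e_2\urcorner\Rightarrow\ulcorner e_1\,e_2\urcorner$. (Application associates to the left.) *)

theory Defs
  imports Main
begin

datatype cty = TBool | TUnit | TTerm | TFun cty cty

text \<open>Terms of Combinatory ReFLect (Church style: combinators carry type annotations).\<close>
datatype ctm =
    CI cty
  | CK cty cty
  | CS cty cty cty
  | CValue cty
  | CLift
  | CAppC
  | CAp ctm ctm
  | CQuote ctm

inductive has_type :: "ctm \<Rightarrow> cty \<Rightarrow> bool" where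
  ty_I: "has_type (CI s) (TFun s s)"
| ty_K: "has_type (CK s t) (TFun s (TFun t s))"
| ty_S: "has_type (CS s t u)
           (TFun (TFun s (TFun t u)) (TFun (TFun s t) (TFun s u)))"
| ty_value: "has_type (CValue s) (TFun TTerm s)"
| ty_lift: "has_type CLift (TFun TTerm TTerm)"
| ty_app: "has_type CAppC (TFun TTerm (TFun TTerm TTerm))"
| ty_Ap: "has_type e1 (TFun s t) \<Longrightarrow> has_type e2 s \<Longrightarrow> has_type (CAp e1 e2) t"
| ty_Quote: "has_type e s \<Longrightarrow> has_type (CQuote e) TTerm"

definition well_typed :: "ctm \<Rightarrow> bool" where
  "well_typed e \<longleftrightarrow> (\<exists>s. has_type e s)"

text \<open>One-step reduction: the basic rules closed under all term constructors
  (congruence closure); the relation \<Rightarrow> of the paper is its reflexive-transitive closure.\<close>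
inductive step :: "ctm \<Rightarrow> ctm \<Rightarrow> bool" where
  r_I: "step (CAp (CI s) e) e"
| r_K: "step (CAp (CAp (CK s t) e1) e2) e1"
| r_S: "step (CAp (CAp (CAp (CS s t u) e1) e2) e3) (CAp (CAp e1 e3) (CAp e2 e3))"
| r_value: "has_type e s \<Longrightarrow> step (CAp (CValue s) (CQuote e)) e"
| r_lift: "step (CAp CLift (CQuote e)) (CQuote (CQuote e))"
| r_app: "well_typed (CAp e1 e2) \<Longrightarrow>
            step (CAp (CAp CAppC (CQuote e1)) (CQuote e2)) (CQuote (CAp e1 e2))"
| c_left: "step e1 e1' \<Longrightarrow> step (CAp e1 e2) (CAp e1' e2)"
| c_right: "step e2 e2' \<Longrightarrow> step (CAp e1 e2) (CAp e1 e2')"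
| c_quote: "step e e' \<Longrightarrow> step (CQuote e) (CQuote e')"

abbreviation reduces :: "ctm \<Rightarrow> ctm \<Rightarrow> bool" where
  "reduces \<equiv> step\<^sup>*\<^sup>*"

end

theory Submission
  imports Defs
begin

text \<open>Reflection admits a quotation diagonal: \<open>diag = S app lift\<close> sends \<open>\<ulcorner>e\<urcorner>\<close> to
  \<open>\<ulcorner>e \<ulcorner>e\<urcorner>\<urcorner>\<close>. Hence \<open>V = S (K F) diag\<close> satisfies \<open>V \<ulcorner>V\<urcorner> \<Rightarrow> F \<ulcorner>V \<ulcorner>V\<urcorner>\<urcorner>\<close>, and
  taking \<open>F = value\<close> the well-typed term \<open>V \<ulcorner>V\<urcorner>\<close> reduces in five steps to itself.
  Going round this cycle forever gives an infinite reduction sequence.\<close>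

lemma tranclp_cycle_infinite_chain:
  assumes "r\<^sup>+\<^sup>+ x x"
  shows "\<exists>f. f 0 = x \<and> (\<forall>n. r (f n) (f (Suc n)))"
proof -
  have successor: "\<exists>z. r\<^sup>+\<^sup>+ z x \<and> r y z" if "r\<^sup>+\<^sup>+ y x" for y
  proof -
    from that obtain z where "r y z" and "r\<^sup>*\<^sup>* z x"
      by (blast dest: tranclpD)
    from \<open>r\<^sup>*\<^sup>* z x\<close> have "r\<^sup>+\<^sup>+ z x"
      using assms by (blast dest: rtranclpD)
    with \<open>r y z\<close> show ?thesis
      by blast
  qed
  have "\<exists>f. \<forall>n. (r\<^sup>+\<^sup>+ (f n) x \<and> (n = 0 \<longrightarrow> f n = x)) \<and> r (f n) (f (Suc n))"
    by (rule dependent_nat_choice) (use assms successor in blast)+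
  then obtain f where "\<And>n. f 0 = x \<and> r (f n) (f (Suc n))"
    by blast
  then show ?thesis
    by blast
qed

lemma step_tranclp_CAp_right:
  "step\<^sup>+\<^sup>+ e e' \<Longrightarrow> step\<^sup>+\<^sup>+ (CAp d e) (CAp d e')"
  by (induction rule: tranclp_induct) (auto intro: c_right tranclp.trancl_into_trancl)

definition diag :: ctm where
  "diag = CAp (CAp (CS TTerm TTerm TTerm) CAppC) CLift"

lemma has_type_diag: "has_type diag (TFun TTerm TTerm)"
  unfolding diag_def by (meson has_type.intros)

lemma diag_quote_tranclp:
  assumes "has_type e (TFun TTerm t)"
  shows "step\<^sup>+\<^sup>+ (CAp diag (CQuote e)) (CQuote (CAp e (CQuote e)))"
proof -
  have "step (CAp diag (CQuote e)) (CAp (CAp CAppC (CQuote e)) (CAp CLift (CQuote e)))"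
    unfolding diag_def by (rule r_S)
  moreover have "step \<dots> (CAp (CAp CAppC (CQuote e)) (CQuote (CQuote e)))"
    by (intro c_right r_lift)
  moreover have "step \<dots> (CQuote (CAp e (CQuote e)))"
    using assms by (meson r_app has_type.intros well_typed_def)
  ultimately show ?thesis
    by (meson tranclp.r_into_trancl tranclp.trancl_into_trancl)
qed

definition quote_fixpoint :: "ctm \<Rightarrow> cty \<Rightarrow> ctm" where
  "quote_fixpoint F s = CAp (CAp (CS TTerm TTerm s) (CAp (CK (TFun TTerm s) TTerm) F)) diag"

lemma has_type_quote_fixpoint:
  "has_type F (TFun TTerm s) \<Longrightarrow> has_type (quote_fixpoint F s) (TFun TTerm s)"
  unfolding quote_fixpoint_def by (meson has_type.intros has_type_diag)

lemma quote_fixpoint_tranclp: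
  assumes F: "has_type F (TFun TTerm s)"
  defines "V \<equiv> quote_fixpoint F s"
  shows "step\<^sup>+\<^sup>+ (CAp V (CQuote V)) (CAp F (CQuote (CAp V (CQuote V))))"
proof -
  have "step (CAp V (CQuote V))
      (CAp (CAp (CAp (CK (TFun TTerm s) TTerm) F) (CQuote V)) (CAp diag (CQuote V)))"
    unfolding V_def quote_fixpoint_def by (rule r_S)
  moreover have "step \<dots> (CAp F (CAp diag (CQuote V)))"
    by (intro c_left r_K)
  moreover have "step\<^sup>+\<^sup>+ \<dots> (CAp F (CQuote (CAp V (CQuote V))))"
    unfolding V_def
    by (rule step_tranclp_CAp_right, rule diag_quote_tranclp, rule has_type_quote_fixpoint)
      (rule F)
  ultimately show ?thesis
    by (meson tranclp_into_tranclp2)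
qed

theorem theorem1:
  shows "\<exists>e (f :: nat \<Rightarrow> ctm). well_typed e \<and> f 0 = e \<and> (\<forall>n. step (f n) (f (Suc n)))"
proof -
  define V where "V = quote_fixpoint (CValue TTerm) TTerm"
  have V: "has_type V (TFun TTerm TTerm)"
    unfolding V_def by (rule has_type_quote_fixpoint) (rule ty_value)
  have typed: "has_type (CAp V (CQuote V)) TTerm"
    by (rule ty_Ap[OF V ty_Quote[OF V]])
  have "step\<^sup>+\<^sup>+ (CAp V (CQuote V)) (CAp (CValue TTerm) (CQuote (CAp V (CQuote V))))"
    unfolding V_def by (rule quote_fixpoint_tranclp) (rule ty_value)
  moreover have "step \<dots> (CAp V (CQuote V))"
    using typed by (rule r_value)
  ultimately have "step\<^sup>+\<^sup>+ (CAp V (CQuote V)) (CAp V (CQuote V))"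
    by (rule tranclp.trancl_into_trancl)
  then obtain f where "f 0 = CAp V (CQuote V)" and "\<forall>n. step (f n) (f (Suc n))"
    by (blast dest: tranclp_cycle_infinite_chain)
  moreover from typed have "well_typed (CAp V (CQuote V))"
    unfolding well_typed_def ..
  ultimately show ?thesis
    by blast
qed

end
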